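(* Let $(\mathcal A,\varphi,\mathcal F,\Phi)$ be a ncps of type B$'$ with associated infinitesimal ncps $(\mathcal B,\varphi,\varphi')$, let $q\in\mathcal F$ with $q^2=q$, $\Phi(q)=1$ and $(\mathcal A,\{q\})$ cyclic-antimonotone independent, and let $p:=1_{\mathcal B}-q$. Then for every $n\in\mathbb N$ and every $\sigma\in\mathrm{NC}(n)$, $$\sum_{\pi\in\mathrm{NC}(n),\ \pi\le\sigma}\kappa'_\pi[p,p,\dots,p]=-|\sigma|.$$
   Context: Ncps of type B$'$ $(\mathcal A,\varphi,\mathcal F,\Phi)$: $\mathcal A$ unital complex algebra, $\varphi(1_{\mathcal A})=1$, $\mathcal F$ an algebra which is an $\mathcal A$-bimodule compatible with its multiplication, $\Phi:\mathcal F\to\mathbb C$ linear. $\mathcal B=\mathcal A\oplus\mathcal F$ with product $(a_1,f_1)(a_2,f_2)=(a_1a_2,a_1f_2+f_1a_2+f_1f_2)$, unit $1_{\mathcal A}$; $\varphi(a+f):=\varphi(a)$, $\varphi'(a+f):=\Phi(f)$. Cyclic-antimonotone independence of $(\mathcal A,\{q\})$: $\Phi(a_0qa_1\cdots a_{n-1}qa_n)=\varphi(a_0a_n)\prod_{i=1}^{n-1}\varphi(a_i)\Phi(q^n)$ for $a_l\in\mathcal A$. $\mathrm{NC}(n)$: noncrossing partitions of $\{1,\dots,n\}$ with the refinement order, $|\sigma|$ the number of blocks. Infinitesimal free cumulants: let $\mathbb G=\mathbb C[\epsilon]/(\epsilon^2)$, $\tilde\varphi=\varphi+\epsilon\varphi':\mathcal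 B\to\mathbb G$, $\tilde\varphi_\pi[b_1,\dots,b_n]=\prod_{V\in\pi}\tilde\varphi(\prod_{i\in V}^{\to}b_i)$ (ordered products over blocks), $\tilde\kappa_\pi=\sum_{\sigma\le\pi}\tilde\varphi_\sigma\,\mu_n(\sigma,\pi)$ with $\mu_n$ the Möbius function of $\mathrm{NC}(n)$; writing $\tilde\kappa_\pi=\kappa_\pi+\epsilon\kappa'_\pi$, $\kappa'_\pi$ is the infinitesimal free cumulant. *)

theory Defs
  imports Complex_Main "HOL-Library.Disjoint_Sets" "HOL-Library.Product_Plus" "HOL-Computational_Algebra.Polynomial"
begin

text \<open>F is a (not necessarily
unital) complex algebra: a ring type 'f with scalar multiplication sF.  la / ra are
the left / right actions of A on F making F an A-bimodule compatible with the
multiplication of F.  phi and Phi are complex-linear functionals.\<close>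

definition cplx_algebra :: "(complex \<Rightarrow> 'a::ring \<Rightarrow> 'a) \<Rightarrow> bool" where
  "cplx_algebra s \<longleftrightarrow> module s \<and>
     (\<forall>c x y. s c (x * y) = s c x * y \<and> s c (x * y) = x * s c y)"

definition ncps_typeB' ::
  "(complex \<Rightarrow> 'a::ring_1 \<Rightarrow> 'a) \<Rightarrow> ('a \<Rightarrow> complex) \<Rightarrow>
   (complex \<Rightarrow> 'f::ring \<Rightarrow> 'f) \<Rightarrow> ('a \<Rightarrow> 'f \<Rightarrow> 'f) \<Rightarrow> ('f \<Rightarrow> 'a \<Rightarrow> 'f) \<Rightarrow>
   ('f \<Rightarrow> complex) \<Rightarrow> bool" where
  "ncps_typeB' sA phi sF la ra Phi \<longleftrightarrow>
     cplx_algebra sA \<and> cplx_algebra sF \<and>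
     module_hom sA (*) phi \<and> phi 1 = 1 \<and>
     module_hom sF (*) Phi \<and>
     \<comment> \<open>bimodule axioms (bilinearity, unit, associativity of the actions)\<close>
     (\<forall>a f g. la a (f + g) = la a f + la a g) \<and>
     (\<forall>a b f. la (a + b) f = la a f + la b f) \<and>
     (\<forall>c a f. la (sA c a) f = sF c (la a f) \<and> la a (sF c f) = sF c (la a f)) \<and>
     (\<forall>f g a. ra (f + g) a = ra f a + ra g a) \<and>
     (\<forall>f a b. ra f (a + b) = ra f a + ra f b) \<and>
     (\<forall>c a f. ra f (sA c a) = sF c (ra f a) \<and> ra (sF c f) a = sF c (ra f a)) \<and>
     (\<forall>f. la 1 f = f) \<and> (\<forall>f. ra f 1 = f) \<and>
     (\<forall>a b f. la (a * b) f = la a (la b f)) \<and>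
     (\<forall>a b f. ra f (a * b) = ra (ra f a) b) \<and>
     (\<forall>a b f. ra (la a f) b = la a (ra f b)) \<and>
     \<comment> \<open>compatibility with the multiplication of F\<close>
     (\<forall>a f g. la a (f * g) = la a f * g) \<and>
     (\<forall>a f g. ra (f * g) a = f * ra g a) \<and>
     (\<forall>a f g. ra f a * g = f * la a g)"

text \<open>Elements of B are pairs (a, f); 1_A is (1, 0), a \<in> A is (a, 0), f \<in> F is (0, f).\<close>

definition bmul :: "('a \<Rightarrow> 'f \<Rightarrow> 'f) \<Rightarrow> ('f \<Rightarrow> 'a \<Rightarrow> 'f) \<Rightarrow>
    ('a::ring_1 \<times> 'f::ring) \<Rightarrow> ('a \<times> 'f) \<Rightarrow> ('a \<times> 'f)" where
  "bmul la ra x y =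
     (fst x * fst y, la (fst x) (snd y) + ra (snd x) (fst y) + snd x * snd y)"

definition bprodlist :: "('a \<Rightarrow> 'f \<Rightarrow> 'f) \<Rightarrow> ('f \<Rightarrow> 'a \<Rightarrow> 'f) \<Rightarrow>
    ('a::ring_1 \<times> 'f::ring) list \<Rightarrow> ('a \<times> 'f)" where
  "bprodlist la ra xs = foldr (bmul la ra) xs (1, 0)"

definition ordprod :: "('a \<Rightarrow> 'f \<Rightarrow> 'f) \<Rightarrow> ('f \<Rightarrow> 'a \<Rightarrow> 'f) \<Rightarrow>
    (nat \<Rightarrow> ('a::ring_1 \<times> 'f::ring)) \<Rightarrow> nat set \<Rightarrow> ('a \<times> 'f)" where
  "ordprod la ra b V = bprodlist la ra (map b (sorted_list_of_set V))"

text \<open>The word a_0 q a_1 q ... q a_n (n \<ge> 1) in B.\<close>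
definition ca_word :: "'f \<Rightarrow> (nat \<Rightarrow> 'a) \<Rightarrow> nat \<Rightarrow> ('a::ring_1 \<times> 'f::ring) list" where
  "ca_word q a n = (a 0, 0) # concat (map (\<lambda>i. [(0, q), (a i, 0)]) [1..<n+1])"

definition cyclic_antimonotone_indep ::
  "('a::ring_1 \<Rightarrow> complex) \<Rightarrow> ('a \<Rightarrow> 'f \<Rightarrow> 'f) \<Rightarrow> ('f \<Rightarrow> 'a \<Rightarrow> 'f) \<Rightarrow>
   ('f::ring \<Rightarrow> complex) \<Rightarrow> 'f \<Rightarrow> bool" where
  "cyclic_antimonotone_indep phi la ra Phi q \<longleftrightarrow>
     (\<forall>n a. n \<ge> 1 \<longrightarrow>
        Phi (snd (bprodlist la ra (ca_word q a n))) =
          phi (a 0 * a n) * (\<Prod>i\<in>{1..<n}. phi (a i)) *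
          Phi (snd (bprodlist la ra (replicate n (0, q)))))"

definition noncrossing :: "nat set set \<Rightarrow> bool" where
  "noncrossing \<pi> \<longleftrightarrow> (\<forall>V\<in>\<pi>. \<forall>W\<in>\<pi>. V \<noteq> W \<longrightarrow>
     \<not> (\<exists>a b c d. a < b \<and> b < c \<and> c < d \<and> a \<in> V \<and> c \<in> V \<and> b \<in> W \<and> d \<in> W))"

definition NC :: "nat \<Rightarrow> nat set set set" where
  "NC n = {\<pi>. partition_on {1..n} \<pi> \<and> noncrossing \<pi>}"

definition refines :: "nat set set \<Rightarrow> nat set set \<Rightarrow> bool" where
  "refines \<pi> \<sigma> \<longleftrightarrow> (\<forall>V\<in>\<pi>. \<exists>W\<in>\<sigma>. V \<subseteq> W)"

text \<open>The recursion descends along strict chains inside P, so a fuel of card P suffices.\<close>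
fun mobius_fuel :: "nat \<Rightarrow> 'p set \<Rightarrow> ('p \<Rightarrow> 'p \<Rightarrow> bool) \<Rightarrow> 'p \<Rightarrow> 'p \<Rightarrow> int" where
  "mobius_fuel 0 P le x y = (if x = y then 1 else 0)"
| "mobius_fuel (Suc k) P le x y =
     (if x = y then 1
      else if le x y then - (\<Sum>z\<in>{z\<in>P. le x z \<and> le z y \<and> z \<noteq> y}. mobius_fuel k P le x z)
      else 0)"

definition mobius :: "'p set \<Rightarrow> ('p \<Rightarrow> 'p \<Rightarrow> bool) \<Rightarrow> 'p \<Rightarrow> 'p \<Rightarrow> int" where
  "mobius P le x y = mobius_fuel (card P) P le x y"

text \<open>G = C[\<epsilon>]/(\<epsilon>^2) is realised inside complex polynomials in \<epsilon>: all
  computations are ring operations, so reading off coefficients 0 and 1 of a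
  polynomial result gives exactly the corresponding element of G.
  tphi b = phi(b) + \<epsilon> phi'(b), with phi(a+f) = phi(a), phi'(a+f) = Phi(f).\<close>

definition tphi :: "('a \<Rightarrow> complex) \<Rightarrow> ('f \<Rightarrow> complex) \<Rightarrow> ('a \<times> 'f) \<Rightarrow> complex poly" where
  "tphi phi Phi x = [: phi (fst x), Phi (snd x) :]"

definition tphi_part :: "('a::ring_1 \<Rightarrow> complex) \<Rightarrow> ('a \<Rightarrow> 'f \<Rightarrow> 'f) \<Rightarrow> ('f \<Rightarrow> 'a \<Rightarrow> 'f) \<Rightarrow>
    ('f::ring \<Rightarrow> complex) \<Rightarrow> (nat \<Rightarrow> ('a \<times> 'f)) \<Rightarrow> nat set set \<Rightarrow> complex poly" where
  "tphi_part phi la ra Phi b \<pi> = (\<Prod>V\<in>\<pi>. tphi phi Phi (ordprod la ra b V))"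

definition tkappa :: "nat \<Rightarrow> ('a::ring_1 \<Rightarrow> complex) \<Rightarrow> ('a \<Rightarrow> 'f \<Rightarrow> 'f) \<Rightarrow> ('f \<Rightarrow> 'a \<Rightarrow> 'f) \<Rightarrow>
    ('f::ring \<Rightarrow> complex) \<Rightarrow> (nat \<Rightarrow> ('a \<times> 'f)) \<Rightarrow> nat set set \<Rightarrow> complex poly" where
  "tkappa n phi la ra Phi b \<pi> =
     (\<Sum>\<sigma>\<in>{\<sigma>\<in>NC n. refines \<sigma> \<pi>}.
        tphi_part phi la ra Phi b \<sigma> * of_int (mobius (NC n) refines \<sigma> \<pi>))"

definition inf_cumulant :: "nat \<Rightarrow> ('a::ring_1 \<Rightarrow> complex) \<Rightarrow> ('a \<Rightarrow> 'f \<Rightarrow> 'f) \<Rightarrow> ('f \<Rightarrow> 'a \<Rightarrow> 'f) \<Rightarrow>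
    ('f::ring \<Rightarrow> complex) \<Rightarrow> (nat \<Rightarrow> ('a \<times> 'f)) \<Rightarrow> nat set set \<Rightarrow> complex" where
  "inf_cumulant n phi la ra Phi b \<pi> = coeff (tkappa n phi la ra Phi b \<pi>) 1"

end

theory Submission
  imports Defs
begin

text \<open>Moebius inversion on the lattice of noncrossing partitions turns the sum of the
  \<open>\<epsilon>\<close>-extended cumulants over \<open>\<pi> \<le> \<sigma>\<close> into the extended moment along \<open>\<sigma>\<close>.
  Since \<open>p = 1 - q\<close> is idempotent, every block of \<open>\<sigma>\<close> contributes
  \<open>\<phi>(p) + \<epsilon>\<phi>'(p) = 1 - \<epsilon>\<Phi>(q) = 1 - \<epsilon>\<close>, so the moment is \<open>(1 - \<epsilon>)\<^bsup>|\<sigma>|\<^esup>\<close>, whose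
  \<open>\<epsilon>\<close>-coefficient is \<open>-|\<sigma>|\<close>.\<close>

locale finite_poset =
  fixes P :: "'p set" and le :: "'p \<Rightarrow> 'p \<Rightarrow> bool"
  assumes finite_carrier: "finite P"
    and le_refl: "x \<in> P \<Longrightarrow> le x x"
    and le_trans: "x \<in> P \<Longrightarrow> y \<in> P \<Longrightarrow> z \<in> P \<Longrightarrow> le x y \<Longrightarrow> le y z \<Longrightarrow> le x z"
    and le_antisym: "x \<in> P \<Longrightarrow> y \<in> P \<Longrightarrow> le x y \<Longrightarrow> le y x \<Longrightarrow> x = y"
begin

text \<open>The recursion of \<^const>\<open>mobius_fuel\<close> at \<open>(x, y)\<close> only calls pairs \<open>(x, z)\<close> of smaller
  height, so any fuel above the height gives the same value.\<close>

definition height :: "'p \<Rightarrow> 'p \<Rightarrow> nat" where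
  "height x y = card {w\<in>P. le x w \<and> le w y \<and> w \<noteq> x}"

lemma height_le_card: "height x y \<le> card P"
  unfolding height_def by (rule card_mono[OF finite_carrier]) auto

lemma height_pos:
  assumes "y \<in> P" "le x y" "x \<noteq> y"
  shows "height x y > 0"
proof -
  have "y \<in> {w\<in>P. le x w \<and> le w y \<and> w \<noteq> x}"
    using assms le_refl by auto
  then show ?thesis
    unfolding height_def using finite_carrier by (auto simp: card_gt_0_iff)
qed

lemma height_strict_mono:
  assumes "x \<in> P" "y \<in> P" "z \<in> P" "le x z" "le z y" "z \<noteq> y"
  shows "height x z < height x y"
proof -
  let ?I = "\<lambda>v. {w\<in>P. le x w \<and> le w v \<and> w \<noteq> x}"
  have "?I z \<subseteq> ?I y - {y}"
    using assms le_trans[of _ z y] le_antisym[of z y] by auto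
  moreover have "y \<in> ?I y"
    using assms le_refl[of y] le_trans[of x z y] le_antisym[of x z] by auto
  ultimately have "?I z \<subset> ?I y"
    by blast
  then show ?thesis
    unfolding height_def using finite_carrier by (simp add: psubset_card_mono)
qed

lemma mobius_fuel_Suc:
  "x \<in> P \<Longrightarrow> y \<in> P \<Longrightarrow> height x y \<le> k \<Longrightarrow>
     mobius_fuel (Suc k) P le x y = mobius_fuel k P le x y"
proof (induction k arbitrary: y)
  case 0
  then show ?case
    using height_pos[of y x] by (cases "x = y \<or> \<not> le x y") auto
next
  case (Suc k)
  let ?I = "{z\<in>P. le x z \<and> le z y \<and> z \<noteq> y}"
  have "height x z \<le> k" if "z \<in> ?I" for z
    using that Suc.prems height_strict_mono[of x y z] by auto
  then have "(\<Sum>z\<in>?I. mobius_fuel (Suc k) P le x z) = (\<Sum>z\<in>?I. mobius_fuel k P le x z)"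
    using Suc.prems by (intro sum.cong refl Suc.IH) auto
  then show ?case
    unfolding mobius_fuel.simps(2)[of "Suc k" P le x y] mobius_fuel.simps(2)[of k P le x y]
    by (simp del: mobius_fuel.simps)
qed

lemma mobius_refl: "mobius P le x x = 1"
  unfolding mobius_def by (cases "card P") auto

lemma mobius_less:
  assumes "x \<in> P" "y \<in> P" "le x y" "x \<noteq> y"
  shows "mobius P le x y = - (\<Sum>z\<in>{z\<in>P. le x z \<and> le z y \<and> z \<noteq> y}. mobius P le x z)"
proof -
  let ?I = "{z\<in>P. le x z \<and> le z y \<and> z \<noteq> y}"
  obtain k where k: "card P = Suc k"
    using assms finite_carrier by (metis card_0_eq empty_iff not0_implies_Suc)
  have "mobius P le x y = - (\<Sum>z\<in>?I. mobius_fuel k P le x z)"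
    unfolding mobius_def k mobius_fuel.simps(2)[of k P le x y] using assms by simp
  also have "(\<Sum>z\<in>?I. mobius_fuel k P le x z) = (\<Sum>z\<in>?I. mobius P le x z)"
  proof (rule sum.cong[OF refl])
    fix z assume z: "z \<in> ?I"
    have "height x z \<le> k"
      using z assms height_strict_mono[of x y z] height_le_card[of x y] k by auto
    then show "mobius_fuel k P le x z = mobius P le x z"
      unfolding mobius_def k using mobius_fuel_Suc[of x z k] assms z by auto
  qed
  finally show ?thesis .
qed

lemma sum_mobius_interval:
  assumes "x \<in> P" "y \<in> P" "le x y"
  shows "(\<Sum>z\<in>{z\<in>P. le x z \<and> le z y}. mobius P le x z) = (if x = y then 1 else 0)"
proof (cases "x = y")
  case True
  then have "{z\<in>P. le x z \<and> le z y} = {x}"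
    using assms le_antisym le_refl by auto
  then show ?thesis
    using True by (simp add: mobius_refl)
next
  case False
  have "{z\<in>P. le x z \<and> le z y} = insert y {z\<in>P. le x z \<and> le z y \<and> z \<noteq> y}"
    using assms le_refl by auto
  then show ?thesis
    using mobius_less[OF assms False] False finite_carrier by simp
qed

lemma mobius_inversion_below:
  fixes f :: "'p \<Rightarrow> 'r::comm_ring_1"
  assumes "y \<in> P"
  shows "(\<Sum>u\<in>{u\<in>P. le u y}. \<Sum>x\<in>{x\<in>P. le x u}. f x * of_int (mobius P le x u)) = f y"
proof -
  let ?S = "{u\<in>P. le u y}"
  have "(\<Sum>u\<in>?S. \<Sum>x\<in>{x\<in>P. le x u}. f x * of_int (mobius P le x u)) =
        (\<Sum>u\<in>?S. \<Sum>x\<in>{x. x \<in> ?S \<and> le x u}. f x * of_int (mobius P le x u))"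
    by (rule sum.cong[OF refl], rule sum.cong) (use assms le_trans in auto)
  also have "\<dots> = (\<Sum>x\<in>?S. f x * of_int (\<Sum>u\<in>{u. u \<in> ?S \<and> le x u}. mobius P le x u))"
    by (subst sum.swap_restrict) (simp_all add: finite_carrier sum_distrib_left)
  also have "\<dots> = (\<Sum>x\<in>?S. f x * of_int (if x = y then 1 else 0))"
  proof (rule sum.cong[OF refl])
    fix x assume "x \<in> ?S"
    moreover have "{u. u \<in> ?S \<and> le x u} = {z\<in>P. le x z \<and> le z y}"
      by auto
    ultimately show "f x * of_int (\<Sum>u\<in>{u. u \<in> ?S \<and> le x u}. mobius P le x u) =
        f x * of_int (if x = y then 1 else 0)"
      using sum_mobius_interval[of x y] assms by simp
  qed
  also have "\<dots> = f y"
    using assms le_refl finite_carrier by (simp add: if_distrib cong: if_cong)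
  finally show ?thesis .
qed

end

lemma refines_antisym:
  assumes "partition_on A \<pi>" "partition_on A \<sigma>" "refines \<pi> \<sigma>" "refines \<sigma> \<pi>"
  shows "\<pi> = \<sigma>"
proof -
  have "\<pi> \<subseteq> \<sigma>"
    if part: "partition_on A \<pi>" and fine: "refines \<pi> \<sigma>" "refines \<sigma> \<pi>" for \<pi> \<sigma>
  proof
    fix V assume V: "V \<in> \<pi>"
    obtain W where W: "W \<in> \<sigma>" "V \<subseteq> W"
      using fine(1) V unfolding refines_def by blast
    obtain V' where V': "V' \<in> \<pi>" "W \<subseteq> V'"
      using fine(2) W unfolding refines_def by blast
    have "V \<noteq> {}"
      using partition_onD3[OF part] V by auto
    with W V' have "V \<inter> V' \<noteq> {}"
      by auto
    then have "V = V'"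
      using disjointD[OF partition_onD2[OF part] V V'(1)] by auto
    then show "V \<in> \<sigma>"
      using W V' by auto
  qed
  then show ?thesis
    using assms by blast
qed

lemma finite_poset_NC: "finite_poset (NC n) refines"
proof
  have "NC n \<subseteq> Pow (Pow {1..n})"
    unfolding NC_def partition_on_def by auto
  then show "finite (NC n)"
    by (rule finite_subset) simp
next
  show "\<pi> \<in> NC n \<Longrightarrow> \<sigma> \<in> NC n \<Longrightarrow> refines \<pi> \<sigma> \<Longrightarrow> refines \<sigma> \<pi> \<Longrightarrow> \<pi> = \<sigma>" for \<pi> \<sigma>
    using refines_antisym[of "{1..n}" \<pi> \<sigma>] unfolding NC_def by auto
qed (unfold refines_def, blast, meson order_trans)

lemma NC_block_finite_nonempty:
  assumes "\<sigma> \<in> NC n" "V \<in> \<sigma>"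
  shows "finite V" "V \<noteq> {}"
proof -
  have "partition_on {1..n} \<sigma>"
    using assms(1) unfolding NC_def by simp
  then show "finite V" "V \<noteq> {}"
    using assms(2) finite_subset[of V "{1..n}"] unfolding partition_on_def by auto
qed

lemma sum_tkappa_below:
  assumes "\<sigma> \<in> NC n"
  shows "(\<Sum>\<pi>\<in>{\<pi>\<in>NC n. refines \<pi> \<sigma>}. tkappa n phi la ra Phi b \<pi>) = tphi_part phi la ra Phi b \<sigma>"
proof -
  interpret finite_poset "NC n" refines
    by (rule finite_poset_NC)
  show ?thesis
    unfolding tkappa_def by (rule mobius_inversion_below[OF assms])
qed

lemma bprodlist_replicate_idem:
  assumes "bmul la ra x x = x" "bmul la ra x (1, 0) = x"
  shows "bprodlist la ra (replicate (Suc m) x) = x"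
  by (induction m) (simp_all add: bprodlist_def assms)

lemma ordprod_const_idem:
  assumes "bmul la ra x x = x" "bmul la ra x (1, 0) = x" "finite V" "V \<noteq> {}"
  shows "ordprod la ra (\<lambda>_. x) V = x"
proof -
  obtain m where "card V = Suc m"
    using assms(3,4) by (metis card_0_eq not0_implies_Suc)
  then show ?thesis
    unfolding ordprod_def using bprodlist_replicate_idem[OF assms(1,2)]
    by (simp add: map_replicate_const)
qed

lemma tphi_ordprod_complement:
  assumes "ncps_typeB' sA phi sF la ra Phi" "q * q = q" "finite V" "V \<noteq> {}"
  shows "tphi phi Phi (ordprod la ra (\<lambda>_. (1, 0) - (0, q)) V) = [:1, - Phi q:]"
proof -
  have unit: "la 1 f = f" "ra f 1 = f" for f
    using assms(1) unfolding ncps_typeB'_def by auto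
  have "bmul la ra (1, - q) (1, - q) = (1, - q)" "bmul la ra (1, - q) (1, 0) = (1, - q)"
    unfolding bmul_def using assms(2) by (simp_all add: unit)
  then have "ordprod la ra (\<lambda>_. (1, 0) - (0, q)) V = (1, - q)"
    using ordprod_const_idem[OF _ _ assms(3,4)] by simp
  moreover have "phi 1 = 1" "module_hom sF (*) Phi"
    using assms(1) unfolding ncps_typeB'_def by auto
  ultimately show ?thesis
    unfolding tphi_def by (simp add: module_hom.neg)
qed

lemma coeff_1_power:
  fixes p :: "'a::comm_semiring_1 poly"
  assumes "coeff p 0 = 1"
  shows "coeff (p ^ k) 1 = of_nat k * coeff p 1"
proof (induction k)
  case (Suc k)
  have "coeff (p * p ^ k) 1 = coeff p 0 * coeff (p ^ k) 1 + coeff p 1 * coeff (p ^ k) 0"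
    by (simp add: coeff_mult)
  then show ?case
    using Suc assms by (simp add: coeff_0_power algebra_simps)
qed simp

theorem lemmaA1:
  fixes sA :: "complex \<Rightarrow> 'a::ring_1 \<Rightarrow> 'a" and phi :: "'a \<Rightarrow> complex"
    and sF :: "complex \<Rightarrow> 'f::ring \<Rightarrow> 'f" and la :: "'a \<Rightarrow> 'f \<Rightarrow> 'f"
    and ra :: "'f \<Rightarrow> 'a \<Rightarrow> 'f" and Phi :: "'f \<Rightarrow> complex"
    and q :: 'f and n :: nat and \<sigma> :: "nat set set"
  assumes "ncps_typeB' sA phi sF la ra Phi"
    and "q * q = q" and "Phi q = 1"
    and "cyclic_antimonotone_indep phi la ra Phi q"
    and "n \<ge> 1" and "\<sigma> \<in> NC n"
  shows "(\<Sum>\<pi>\<in>{\<pi>\<in>NC n. refines \<pi> \<sigma>}.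
            inf_cumulant n phi la ra Phi (\<lambda>_. ((1, 0) - (0, q))) \<pi>) = - of_nat (card \<sigma>)"
proof -
  let ?p = "\<lambda>_::nat. (1, 0) - (0, q) :: 'a \<times> 'f"
  have "tphi_part phi la ra Phi ?p \<sigma> = [:1, -1:] ^ card \<sigma>"
    unfolding tphi_part_def
    using tphi_ordprod_complement[OF assms(1,2)] NC_block_finite_nonempty[OF assms(6)] assms(3)
    by simp
  moreover have "(\<Sum>\<pi>\<in>{\<pi>\<in>NC n. refines \<pi> \<sigma>}. inf_cumulant n phi la ra Phi ?p \<pi>) =
      coeff (tphi_part phi la ra Phi ?p \<sigma>) 1"
    unfolding inf_cumulant_def by (simp add: coeff_sum[symmetric] sum_tkappa_below[OF assms(6)])
  ultimately show ?thesis
    using coeff_1_power[of "[:1, -1:] :: complex poly" "card \<sigma>"] by simp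
qed

end
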